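(* Let $G=(V,E)$ be a finite simple connected graph, $b\in\mathbb{R}^V$ nontrivial, $S\subset V$ a $b$-boundable subset with $s=|S|$, $x_S$ the local solution of $\mathcal{L}x=b$ satisfying the boundary condition $b$, and $b_1=D_S^{-1/2}A_{S,\delta S}D_{\delta S}^{-1/2}b_{\delta S}$. Let $0<\gamma<1$, $T=s^3\log(s^3\gamma^{-1})$ and $N=T/\gamma$. Then $$\Big\|x_S-\sum_{j=1}^N \mathcal{H}_{S,jT/N}\,\frac{T}{N}\,b_1\Big\|\le\gamma\big(\|b_1\|+\|x_S\|\big).$$
   Context: $d_v$ is the degree of $v$, $D$ the diagonal degree matrix, $A$ the adjacency matrix, $\mathcal{L}=D^{-1/2}(D-A)D^{-1/2}$. For $S\subseteq V$, $M_S$ is the principal submatrix indexed by $S$; $\delta(S)=\{u\in V\setminus S: u\sim v\text{ for some }v\in S\}$; $A_{S,\delta S}$ is the submatrix of $A$ with rows $S$ and columns $\delta(S)$; $D_{\delta S}$, $b_{\delta S}$ are restrictions to $\delta(S)$. $S$ is $b$-boundable if (i) $S\subseteq V\setminus\mathrm{supp}(b)$, (ii) $\delta(S)\cap\mathrm{supp}(b)\neq\emptyset$, (iii) the induced subgraph on $S$ is connected and $\delta(S)\neq\emptyset$. The solution of $\mathcal{L}x=b$ satisfying the boundary condition $b$ is $x\in\mathbb{R}^V$ with $x(v)=\sum_{u\sim v}x(u)/\sqrt{d_vd_u}$ for $v\in S$ and $x(v)=b(v)$ for $v\notin S$; $x_S$ is its restriction to $S$. $\mathcal{H}_{S,t}=e^{-t\mathcal{L}_S}$.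 $\|\cdot\|$ is the Euclidean norm. *)

theory Defs
  imports "HOL-Analysis.Analysis"
begin

definition simple_graph :: "'a set \<Rightarrow> ('a \<Rightarrow> 'a \<Rightarrow> bool) \<Rightarrow> bool" where
  "simple_graph V E \<longleftrightarrow> finite V \<and> (\<forall>u v. E u v \<longrightarrow> u \<in> V \<and> v \<in> V)
     \<and> (\<forall>u v. E u v \<longrightarrow> E v u) \<and> (\<forall>u. \<not> E u u)"

definition connected_on :: "('a \<Rightarrow> 'a \<Rightarrow> bool) \<Rightarrow> 'a set \<Rightarrow> bool" where
  "connected_on E S \<longleftrightarrow> S \<noteq> {} \<and>
     (\<forall>u\<in>S. \<forall>v\<in>S. (u, v) \<in> {(a, c). a \<in> S \<and> c \<in> S \<and> E a c}\<^sup>*)"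

definition degree :: "'a set \<Rightarrow> ('a \<Rightarrow> 'a \<Rightarrow> bool) \<Rightarrow> 'a \<Rightarrow> real" where
  "degree V E v = real (card {u \<in> V. E v u})"

definition adj :: "('a \<Rightarrow> 'a \<Rightarrow> bool) \<Rightarrow> 'a \<Rightarrow> 'a \<Rightarrow> real" where
  "adj E u v = (if E u v then 1 else 0)"

definition nlap :: "'a set \<Rightarrow> ('a \<Rightarrow> 'a \<Rightarrow> bool) \<Rightarrow> 'a \<Rightarrow> 'a \<Rightarrow> real" where
  "nlap V E u v = ((if u = v then degree V E u else 0) - adj E u v)
                   / sqrt (degree V E u * degree V E v)"

definition vboundary :: "'a set \<Rightarrow> ('a \<Rightarrow> 'a \<Rightarrow> bool) \<Rightarrow> 'a set \<Rightarrow> 'a set" where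
  "vboundary V E S = {u \<in> V - S. \<exists>v\<in>S. E u v}"

definition supp :: "'a set \<Rightarrow> ('a \<Rightarrow> real) \<Rightarrow> 'a set" where
  "supp V b = {v \<in> V. b v \<noteq> 0}"

definition boundable :: "'a set \<Rightarrow> ('a \<Rightarrow> 'a \<Rightarrow> bool) \<Rightarrow> ('a \<Rightarrow> real) \<Rightarrow> 'a set \<Rightarrow> bool" where
  "boundable V E b S \<longleftrightarrow> S \<subseteq> V - supp V b
     \<and> vboundary V E S \<inter> supp V b \<noteq> {}
     \<and> connected_on E S \<and> vboundary V E S \<noteq> {}"

definition is_local_solution ::
  "'a set \<Rightarrow> ('a \<Rightarrow> 'a \<Rightarrow> bool) \<Rightarrow> 'a set \<Rightarrow> ('a \<Rightarrow> real) \<Rightarrow> ('a \<Rightarrow> real) \<Rightarrow> bool" where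
  "is_local_solution V E S b x \<longleftrightarrow>
     (\<forall>v\<in>S. x v = (\<Sum>u\<in>{u \<in> V. E v u}. x u / sqrt (degree V E v * degree V E u)))
     \<and> (\<forall>v\<in>V - S. x v = b v)"

definition vnorm :: "'a set \<Rightarrow> ('a \<Rightarrow> real) \<Rightarrow> real" where
  "vnorm S f = sqrt (\<Sum>v\<in>S. (f v)\<^sup>2)"

definition matvec :: "'a set \<Rightarrow> ('a \<Rightarrow> 'a \<Rightarrow> real) \<Rightarrow> ('a \<Rightarrow> real) \<Rightarrow> 'a \<Rightarrow> real" where
  "matvec S M f = (\<lambda>v. if v \<in> S then (\<Sum>u\<in>S. M v u * f u) else 0)"

text \<open>Heat kernel of the principal submatrix L_S applied to a vector: exp(-t L_S) f.\<close>
definition heat_apply ::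
  "'a set \<Rightarrow> ('a \<Rightarrow> 'a \<Rightarrow> bool) \<Rightarrow> 'a set \<Rightarrow> real \<Rightarrow> ('a \<Rightarrow> real) \<Rightarrow> 'a \<Rightarrow> real" where
  "heat_apply V E S t f = (\<lambda>v. \<Sum>k. ((- t) ^ k / fact k) * (((matvec S (nlap V E)) ^^ k) f) v)"

definition bvec1 :: "'a set \<Rightarrow> ('a \<Rightarrow> 'a \<Rightarrow> bool) \<Rightarrow> 'a set \<Rightarrow> ('a \<Rightarrow> real) \<Rightarrow> 'a \<Rightarrow> real" where
  "bvec1 V E S b = (\<lambda>v. if v \<in> S then
      (\<Sum>u\<in>vboundary V E S. adj E v u * b u / sqrt (degree V E v * degree V E u)) else 0)"

end

theory Submission
  imports Defs "HOL-Library.Transitive_Closure_Table"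
begin

text \<open>
  In an orthonormal eigenbasis of the symmetric matrix \<L>_S (eigenvalues \<lambda>_i) let x_S have
  coefficients c_i. Then b_1 = \<L>_S x_S has coefficients \<lambda>_i c_i, and the heat sum has
  coefficients c_i (1 - \<phi>_i), where 1 - \<phi>_i = h \<Sum>_{j=1..N} \<lambda>_i exp(-j h \<lambda>_i) with h = T/N
  is a Riemann sum for \<integral>_0^\<infinity> \<lambda>_i exp(-t \<lambda>_i) dt = 1. Summing the geometric series gives
  0 \<le> \<phi>_i \<le> h \<lambda>_i + exp(-T \<lambda>_i). Since S is connected and has an edge leaving it, a Poincar\'e
  inequality along simple paths gives \<lambda>_i \<ge> s^-3, so the choice of T makes exp(-T \<lambda>_i) \<le> \<gamma>,
  while h \<le> \<gamma>. Hence |\<phi>_i| \<le> \<gamma> (1 + \<lambda>_i), and by Parseval the error is at most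
  \<gamma> \<parallel>x_S + b_1\<parallel> \<le> \<gamma> (\<parallel>b_1\<parallel> + \<parallel>x_S\<parallel>).
\<close>

section \<open>Inner products of functions on a finite set\<close>

definition inner_on :: "'a set \<Rightarrow> ('a \<Rightarrow> real) \<Rightarrow> ('a \<Rightarrow> real) \<Rightarrow> real" where
  "inner_on S f g = (\<Sum>v\<in>S. f v * g v)"

definition orthonormal_on :: "'a set \<Rightarrow> (nat \<Rightarrow> 'a \<Rightarrow> real) \<Rightarrow> nat \<Rightarrow> bool" where
  "orthonormal_on S e m \<longleftrightarrow>
     (\<forall>i<m. \<forall>j<m. inner_on S (e i) (e j) = (if i = j then 1 else 0))"

lemma inner_on_commute: "inner_on S f g = inner_on S g f"
  unfolding inner_on_def by (simp add: mult.commute)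

lemma inner_on_self_nonneg: "0 \<le> inner_on S f f"
  unfolding inner_on_def by (simp add: sum_nonneg)

lemma inner_on_self_eq_sum_squares: "inner_on S f f = (\<Sum>v\<in>S. (f v)\<^sup>2)"
  unfolding inner_on_def by (simp add: power2_eq_square)

lemma inner_on_cong:
  "(\<And>v. v \<in> S \<Longrightarrow> f v = f' v) \<Longrightarrow> (\<And>v. v \<in> S \<Longrightarrow> g v = g' v) \<Longrightarrow>
   inner_on S f g = inner_on S f' g'"
  unfolding inner_on_def by (rule sum.cong) auto

lemma inner_on_sum_left:
  "inner_on S (\<lambda>v. \<Sum>i\<in>I. c i * e i v) g = (\<Sum>i\<in>I. c i * inner_on S (e i) g)"
  unfolding inner_on_def
  by (simp add: sum_distrib_right sum_distrib_left mult.assoc sum.swap[of _ S])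

lemma inner_on_sum_right:
  "inner_on S g (\<lambda>v. \<Sum>i\<in>I. c i * e i v) = (\<Sum>i\<in>I. c i * inner_on S g (e i))"
  using inner_on_sum_left[of S c e I g] by (simp add: inner_on_commute)

lemma inner_on_diff_left: "inner_on S (\<lambda>v. f v - g v) h = inner_on S f h - inner_on S g h"
  unfolding inner_on_def by (simp add: left_diff_distrib sum_subtractf)

lemma inner_on_diff_right: "inner_on S h (\<lambda>v. f v - g v) = inner_on S h f - inner_on S h g"
  unfolding inner_on_def by (simp add: right_diff_distrib sum_subtractf)

lemma inner_on_add_scale_left:
  "inner_on S (\<lambda>v. f v + c * g v) h = inner_on S f h + c * inner_on S g h"
  unfolding inner_on_def by (simp add: sum.distrib sum_distrib_left algebra_simps)

lemma inner_on_add_scale_right: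
  "inner_on S h (\<lambda>v. f v + c * g v) = inner_on S h f + c * inner_on S h g"
  using inner_on_add_scale_left[of S f c g h] by (simp add: inner_on_commute)

lemma inner_on_scale_left: "inner_on S (\<lambda>v. c * f v) g = c * inner_on S f g"
  unfolding inner_on_def by (simp add: sum_distrib_left mult.assoc)

lemma inner_on_scale_right: "inner_on S g (\<lambda>v. c * f v) = c * inner_on S g f"
  using inner_on_scale_left[of S c f g] by (simp add: inner_on_commute)

lemma inner_on_indicator_left:
  assumes "finite S" "v \<in> S"
  shows "inner_on S (\<lambda>u. if u = v then 1 else 0) g = g v"
proof -
  have "inner_on S (\<lambda>u. if u = v then 1 else 0) g = (\<Sum>u\<in>S. if u = v then g u else 0)"
    unfolding inner_on_def by (intro sum.cong) auto
  then show ?thesis using assms by simp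
qed

lemma eq_zero_of_inner_on_self_eq_zero:
  assumes "finite S" "inner_on S f f = 0" "v \<in> S"
  shows "f v = 0"
  using assms by (simp add: inner_on_self_eq_sum_squares sum_nonneg_eq_0_iff)

lemma vnorm_eq_sqrt_inner_on: "vnorm S f = sqrt (inner_on S f f)"
  unfolding vnorm_def inner_on_self_eq_sum_squares ..

lemma matvec_apply: "v \<in> S \<Longrightarrow> matvec S M f v = (\<Sum>u\<in>S. M v u * f u)"
  unfolding matvec_def by simp

lemma inner_on_matvec_symmetric:
  assumes "\<forall>u\<in>S. \<forall>v\<in>S. M u v = M v u"
  shows "inner_on S f (matvec S M g) = inner_on S (matvec S M f) g"
proof -
  have "inner_on S f (matvec S M g) = (\<Sum>v\<in>S. \<Sum>u\<in>S. f v * M v u * g u)"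
    unfolding inner_on_def matvec_def by (simp add: sum_distrib_left mult.assoc)
  also have "\<dots> = (\<Sum>u\<in>S. \<Sum>v\<in>S. M u v * f v * g u)"
    using assms by (subst sum.swap) (intro sum.cong refl, simp add: mult_ac)
  also have "\<dots> = inner_on S (matvec S M f) g"
    unfolding inner_on_def matvec_def by (simp add: sum_distrib_right)
  finally show ?thesis .
qed

section \<open>Orthonormal systems\<close>

lemma orthonormal_on_inner_sums:
  assumes "orthonormal_on S e m"
  shows "inner_on S (\<lambda>v. \<Sum>i<m. a i * e i v) (\<lambda>v. \<Sum>i<m. b i * e i v) = (\<Sum>i<m. a i * b i)"
proof -
  have "inner_on S (\<lambda>v. \<Sum>i<m. a i * e i v) (\<lambda>v. \<Sum>i<m. b i * e i v)
      = (\<Sum>i<m. a i * (\<Sum>j<m. b j * inner_on S (e i) (e j)))"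
    by (simp add: inner_on_sum_left inner_on_sum_right)
  also have "\<dots> = (\<Sum>i<m. a i * (\<Sum>j<m. if j = i then b j else 0))"
    using assms unfolding orthonormal_on_def by (intro sum.cong refl arg_cong2[where f = times]) auto
  finally show ?thesis by simp
qed

lemma orthonormal_on_coefficient:
  assumes "orthonormal_on S e m" "j < m"
  shows "inner_on S (\<lambda>v. \<Sum>i<m. a i * e i v) (e j) = a j"
proof -
  have "inner_on S (\<lambda>v. \<Sum>i<m. a i * e i v) (e j) = (\<Sum>i<m. if i = j then a i else 0)"
    using assms unfolding inner_on_sum_left orthonormal_on_def by (intro sum.cong) auto
  then show ?thesis using assms(2) by simp
qed

lemma vnorm_orthonormal_expansion:
  assumes "orthonormal_on S e m" "\<And>v. v \<in> S \<Longrightarrow> f v = (\<Sum>i<m. a i * e i v)"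
  shows "vnorm S f = sqrt (\<Sum>i<m. (a i)\<^sup>2)"
proof -
  have "inner_on S f f = inner_on S (\<lambda>v. \<Sum>i<m. a i * e i v) (\<lambda>v. \<Sum>i<m. a i * e i v)"
    using assms(2) by (intro inner_on_cong)
  then show ?thesis
    unfolding vnorm_eq_sqrt_inner_on orthonormal_on_inner_sums[OF assms(1)]
    by (simp add: power2_eq_square)
qed

definition orth_residual ::
  "'a set \<Rightarrow> (nat \<Rightarrow> 'a \<Rightarrow> real) \<Rightarrow> nat \<Rightarrow> ('a \<Rightarrow> real) \<Rightarrow> 'a \<Rightarrow> real" where
  "orth_residual S e m f = (\<lambda>v. f v - (\<Sum>i<m. inner_on S f (e i) * e i v))"

lemma orth_residual_orthogonal:
  assumes "orthonormal_on S e m" "j < m"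
  shows "inner_on S (orth_residual S e m f) (e j) = 0"
  unfolding orth_residual_def inner_on_diff_left
  using orthonormal_on_coefficient[OF assms] by simp

lemma inner_on_orth_residual_self:
  assumes "orthonormal_on S e m"
  shows "inner_on S (orth_residual S e m f) (orth_residual S e m f)
           = inner_on S f f - (\<Sum>i<m. (inner_on S f (e i))\<^sup>2)"
proof -
  let ?p = "\<lambda>v. \<Sum>i<m. inner_on S f (e i) * e i v"
  have "inner_on S f ?p = (\<Sum>i<m. (inner_on S f (e i))\<^sup>2)"
    by (simp add: inner_on_sum_right power2_eq_square)
  moreover have "inner_on S ?p ?p = (\<Sum>i<m. (inner_on S f (e i))\<^sup>2)"
    using orthonormal_on_inner_sums[OF assms] by (simp add: power2_eq_square)
  ultimately show ?thesis
    unfolding orth_residual_def inner_on_diff_left inner_on_diff_right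
    by (simp add: inner_on_commute[of S ?p f])
qed

lemma bessel_inequality:
  assumes "orthonormal_on S e m"
  shows "(\<Sum>i<m. (inner_on S f (e i))\<^sup>2) \<le> inner_on S f f"
  using inner_on_orth_residual_self[OF assms, of f]
    inner_on_self_nonneg[of S "orth_residual S e m f"] by simp

lemma orthonormal_on_sum_squares:
  assumes "orthonormal_on S e m"
  shows "(\<Sum>v\<in>S. \<Sum>i<m. (e i v)\<^sup>2) = real m"
proof -
  have "(\<Sum>v\<in>S. \<Sum>i<m. (e i v)\<^sup>2) = (\<Sum>i<m. inner_on S (e i) (e i))"
    by (simp add: inner_on_self_eq_sum_squares sum.swap[of _ S])
  also have "\<dots> = (\<Sum>i<m. 1)"
    using assms unfolding orthonormal_on_def by (intro sum.cong) auto
  finally show ?thesis by simp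
qed

lemma orthonormal_on_length_le_card:
  assumes "orthonormal_on S e m" "finite S"
  shows "m \<le> card S"
proof -
  have "real m = (\<Sum>v\<in>S. \<Sum>i<m. (e i v)\<^sup>2)"
    using orthonormal_on_sum_squares[OF assms(1)] by simp
  also have "\<dots> \<le> (\<Sum>v\<in>S. 1)"
  proof (rule sum_mono)
    fix v assume "v \<in> S"
    then show "(\<Sum>i<m. (e i v)\<^sup>2) \<le> 1"
      using bessel_inequality[OF assms(1), of "\<lambda>u. if u = v then 1 else 0"] assms(2)
      by (simp add: inner_on_indicator_left)
  qed
  finally show ?thesis by simp
qed

lemma orthonormal_on_extend:
  assumes "orthonormal_on S e m" "inner_on S g g = 1" "\<And>i. i < m \<Longrightarrow> inner_on S g (e i) = 0"
  shows "orthonormal_on S (e(m := g)) (Suc m)"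
  using assms unfolding orthonormal_on_def by (auto simp: less_Suc_eq inner_on_commute)

definition orth_compl_on :: "'a set \<Rightarrow> (nat \<Rightarrow> 'a \<Rightarrow> real) \<Rightarrow> nat \<Rightarrow> ('a \<Rightarrow> real) set" where
  "orth_compl_on S e m = {f. (\<forall>u. u \<notin> S \<longrightarrow> f u = 0) \<and> (\<forall>i<m. inner_on S f (e i) = 0)}"

lemma orth_compl_on_add_scale:
  "f \<in> orth_compl_on S e m \<Longrightarrow> g \<in> orth_compl_on S e m \<Longrightarrow>
   (\<lambda>x. f x + t * g x) \<in> orth_compl_on S e m"
  unfolding orth_compl_on_def by (simp add: inner_on_add_scale_left)

lemma orth_compl_on_scale:
  "f \<in> orth_compl_on S e m \<Longrightarrow> (\<lambda>x. c * f x) \<in> orth_compl_on S e m"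
  unfolding orth_compl_on_def by (simp add: inner_on_scale_left)

lemma normalized_orthogonal_exists:
  assumes "0 < inner_on S g g" "\<And>i. i < m \<Longrightarrow> inner_on S g (e i) = 0"
  shows "\<exists>h\<in>orth_compl_on S e m. inner_on S h h = 1"
proof -
  define c where "c = 1 / sqrt (inner_on S g g)"
  define h where "h = (\<lambda>u. if u \<in> S then c * g u else 0)"
  have h_inner: "inner_on S h k = c * inner_on S g k" for k
    unfolding h_def inner_on_def by (simp add: sum_distrib_left mult_ac)
  have "inner_on S h h = c * (c * inner_on S g g)"
    by (simp add: h_inner inner_on_commute[of S g h])
  also have "\<dots> = 1"
    unfolding c_def using assms(1) by (simp add: field_simps)
  finally have "inner_on S h h = 1" .
  moreover have "h \<in> orth_compl_on S e m"
    using assms(2) unfolding orth_compl_on_def by (simp add: h_inner) (simp add: h_def)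
  ultimately show ?thesis by blast
qed

lemma orthonormal_on_expansion:
  assumes "orthonormal_on S e (card S)" "finite S" "v \<in> S"
  shows "f v = (\<Sum>i<card S. inner_on S f (e i) * e i v)"
proof -
  let ?g = "orth_residual S e (card S) f"
  have "inner_on S ?g ?g = 0"
  proof (rule ccontr)
    assume "inner_on S ?g ?g \<noteq> 0"
    then have "0 < inner_on S ?g ?g" using inner_on_self_nonneg[of S ?g] by linarith
    then obtain h where h: "h \<in> orth_compl_on S e (card S)" "inner_on S h h = 1"
      using normalized_orthogonal_exists[of S ?g "card S" e] orth_residual_orthogonal[OF assms(1)]
      by blast
    have "orthonormal_on S (e(card S := h)) (Suc (card S))"
      using orthonormal_on_extend[OF assms(1) h(2)] h(1) unfolding orth_compl_on_def by blast
    from orthonormal_on_length_le_card[OF this assms(2)] show False by simp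
  qed
  from eq_zero_of_inner_on_self_eq_zero[OF assms(2) this assms(3)] show ?thesis
    unfolding orth_residual_def by simp
qed

lemma orthogonal_unit_exists:
  assumes "orthonormal_on S e m" "finite S" "m < card S"
  shows "\<exists>h\<in>orth_compl_on S e m. inner_on S h h = 1"
proof -
  obtain v where v: "v \<in> S" "(\<Sum>i<m. (e i v)\<^sup>2) < 1"
  proof (rule ccontr)
    assume "\<not> thesis"
    then have "(\<Sum>v\<in>S. 1) \<le> (\<Sum>v\<in>S. \<Sum>i<m. (e i v)\<^sup>2)"
      using that by (intro sum_mono) (meson not_le)
    then show False using orthonormal_on_sum_squares[OF assms(1)] assms(3) by simp
  qed
  let ?g = "orth_residual S e m (\<lambda>u. if u = v then 1 else 0)"
  have "inner_on S ?g ?g = 1 - (\<Sum>i<m. (e i v)\<^sup>2)"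
    using inner_on_orth_residual_self[OF assms(1)] assms(2) v(1)
    by (simp add: inner_on_indicator_left)
  then show ?thesis
    using v(2) normalized_orthogonal_exists[of S ?g m e] orth_residual_orthogonal[OF assms(1)]
    by simp
qed

section \<open>Eigenbases of symmetric matrices\<close>

lemma linear_le_quadratic_imp_zero:
  fixes a c :: real
  assumes "\<And>t. 2 * t * a \<le> t\<^sup>2 * c"
  shows "a = 0"
proof (rule ccontr)
  assume "a \<noteq> 0"
  define d where "d = \<bar>c\<bar> + 1"
  have d: "0 < d" "c < 2 * d" unfolding d_def by auto
  have "2 * (a / d) * a \<le> (a / d)\<^sup>2 * c" by (rule assms)
  then have "a\<^sup>2 * (2 * d) \<le> a\<^sup>2 * c"
    using d(1) by (simp add: field_simps power2_eq_square)
  then show False using \<open>a \<noteq> 0\<close> d(2) by simp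
qed

definition quad_form :: "'a set \<Rightarrow> ('a \<Rightarrow> 'a \<Rightarrow> real) \<Rightarrow> ('a \<Rightarrow> real) \<Rightarrow> real" where
  "quad_form S M f = inner_on S f (matvec S M f)"

lemma quad_form_expand: "quad_form S M f = (\<Sum>v\<in>S. \<Sum>u\<in>S. f v * M v u * f u)"
  unfolding quad_form_def inner_on_def matvec_def by (simp add: sum_distrib_left mult.assoc)

lemma quad_form_scale: "quad_form S M (\<lambda>x. c * f x) = c\<^sup>2 * quad_form S M f"
  unfolding quad_form_expand by (simp add: sum_distrib_left power2_eq_square mult_ac)

lemma quad_form_add_scale:
  assumes "\<forall>u\<in>S. \<forall>v\<in>S. M u v = M v u"
  shows "quad_form S M (\<lambda>x. f x + t * g x)
           = quad_form S M f + 2 * t * inner_on S g (matvec S M f) + t\<^sup>2 * quad_form S M g"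
proof -
  have "quad_form S M (\<lambda>x. f x + t * g x) = (\<Sum>v\<in>S. \<Sum>u\<in>S. f v * M v u * f u
      + t * (f v * M v u * g u + g v * M v u * f u) + t\<^sup>2 * (g v * M v u * g u))"
    unfolding quad_form_expand by (intro sum.cong refl) (simp add: algebra_simps power2_eq_square)
  also have "\<dots> = quad_form S M f + t * ((\<Sum>v\<in>S. \<Sum>u\<in>S. f v * M v u * g u)
      + (\<Sum>v\<in>S. \<Sum>u\<in>S. g v * M v u * f u)) + t\<^sup>2 * quad_form S M g"
    unfolding quad_form_expand by (simp add: sum.distrib sum_distrib_left distrib_left)
  also have "(\<Sum>v\<in>S. \<Sum>u\<in>S. f v * M v u * g u) = inner_on S f (matvec S M g)"
    unfolding inner_on_def matvec_def by (simp add: sum_distrib_left mult.assoc)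
  also have "(\<Sum>v\<in>S. \<Sum>u\<in>S. g v * M v u * f u) = inner_on S g (matvec S M f)"
    unfolding inner_on_def matvec_def by (simp add: sum_distrib_left mult.assoc)
  finally have "quad_form S M (\<lambda>x. f x + t * g x)
      = quad_form S M f + t * (inner_on S f (matvec S M g) + inner_on S g (matvec S M f))
        + t\<^sup>2 * quad_form S M g" .
  moreover have "inner_on S f (matvec S M g) = inner_on S g (matvec S M f)"
    using inner_on_matvec_symmetric[OF assms] inner_on_commute by metis
  ultimately show ?thesis by simp
qed

lemma compact_support_box:
  "compact {f::'a \<Rightarrow> real. \<forall>u. f u \<in> (if u \<in> S then {-1..1} else {0})}"
proof -
  let ?X = "\<lambda>u::'a. if u \<in> S then {-1..1::real} else {0}"
  have "compactin (product_topology (\<lambda>i. euclidean) UNIV) (PiE UNIV ?X)"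
    unfolding compactin_PiE by auto
  then have "compact (PiE UNIV ?X)"
    by (simp add: euclidean_product_topology)
  moreover have "PiE UNIV ?X = {f. \<forall>u. f u \<in> ?X u}"
    by (auto simp: PiE_def Pi_def)
  ultimately show ?thesis by simp
qed

lemma closed_orth_compl_on_unit_sphere:
  "closed (orth_compl_on S e m \<inter> {f. inner_on S f f = 1})"
proof -
  have "orth_compl_on S e m \<inter> {f. inner_on S f f = 1}
      = (\<Inter>u\<in>-S. {f. f u = 0}) \<inter> (\<Inter>i\<in>{..<m}. {f. inner_on S f (e i) = 0}) \<inter> {f. inner_on S f f = 1}"
    unfolding orth_compl_on_def by auto
  moreover have "closed (\<Inter>u\<in>-S. {f::'a \<Rightarrow> real. f u = 0})"
    by (intro closed_INT ballI closed_Collect_eq continuous_on_product_coordinates continuous_on_const)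
  moreover have "closed (\<Inter>i\<in>{..<m}. {f::'a \<Rightarrow> real. inner_on S f (e i) = 0})"
    unfolding inner_on_def
    by (intro closed_INT ballI closed_Collect_eq continuous_on_sum continuous_on_mult_right
        continuous_on_product_coordinates continuous_on_const)
  moreover have "closed {f::'a \<Rightarrow> real. inner_on S f f = 1}"
    unfolding inner_on_def
    by (intro closed_Collect_eq continuous_on_sum continuous_on_mult continuous_on_const
        continuous_on_product_coordinates)
  ultimately show ?thesis by (simp only:) (intro closed_Int)
qed

lemma compact_orth_compl_on_unit_sphere:
  assumes "finite S"
  shows "compact (orth_compl_on S e m \<inter> {f. inner_on S f f = 1})"
proof -
  let ?X = "\<lambda>u::'a. if u \<in> S then {-1..1::real} else {0}"
  have bounded: "orth_compl_on S e m \<inter> {f. inner_on S f f = 1} \<subseteq> {f. \<forall>u. f u \<in> ?X u}"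
  proof (intro subsetI CollectI allI)
    fix f u assume "f \<in> orth_compl_on S e m \<inter> {f. inner_on S f f = 1}"
    then have f: "f \<in> orth_compl_on S e m" "inner_on S f f = 1" by auto
    show "f u \<in> ?X u"
    proof (cases "u \<in> S")
      case True
      have "(f u)\<^sup>2 \<le> (\<Sum>v\<in>S. (f v)\<^sup>2)"
        using True assms by (intro member_le_sum) auto
      then have "(f u)\<^sup>2 \<le> 1\<^sup>2" using f(2) by (simp add: inner_on_self_eq_sum_squares)
      then show ?thesis using True abs_le_square_iff[of "f u" 1] by (simp add: abs_le_iff)
    next
      case False
      then show ?thesis using f(1) by (simp add: orth_compl_on_def)
    qed
  qed
  have "{f. \<forall>u. f u \<in> ?X u} \<inter> (orth_compl_on S e m \<inter> {f. inner_on S f f = 1})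
      = orth_compl_on S e m \<inter> {f. inner_on S f f = 1}"
    by (rule Int_absorb1[OF bounded])
  then show ?thesis
    using compact_Int_closed[OF compact_support_box[of S] closed_orth_compl_on_unit_sphere[of S e m]]
    by simp
qed

lemma continuous_on_quad_form: "continuous_on A (quad_form S M)"
proof -
  have "continuous_on UNIV (\<lambda>f::'a \<Rightarrow> real. \<Sum>v\<in>S. \<Sum>u\<in>S. f v * M v u * f u)"
    by (intro continuous_on_sum continuous_on_mult continuous_on_mult_right continuous_on_const
        continuous_on_product_coordinates)
  then show ?thesis
    unfolding quad_form_expand[abs_def] by (rule continuous_on_subset) simp
qed

lemma quad_form_attains_max_on_orth_compl:
  assumes "finite S" "orthonormal_on S e m" "m < card S"
  shows "\<exists>v\<in>orth_compl_on S e m \<inter> {f. inner_on S f f = 1}.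
           \<forall>w\<in>orth_compl_on S e m \<inter> {f. inner_on S f f = 1}. quad_form S M w \<le> quad_form S M v"
proof (rule continuous_attains_sup[OF compact_orth_compl_on_unit_sphere[OF assms(1)] _
      continuous_on_quad_form])
  show "orth_compl_on S e m \<inter> {f. inner_on S f f = 1} \<noteq> {}"
    using orthogonal_unit_exists[OF assms(2,1,3)] by blast
qed

text \<open>
  The variational step of the spectral theorem: a maximiser of the quadratic form on the unit
  sphere of \<open>orth_compl_on S e m\<close> is an eigenvector, with the maximum as eigenvalue.
\<close>

locale quad_form_max =
  fixes S :: "'a set" and M :: "'a \<Rightarrow> 'a \<Rightarrow> real" and e :: "nat \<Rightarrow> 'a \<Rightarrow> real"
    and m :: nat and v :: "'a \<Rightarrow> real"
  assumes finite: "finite S"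
    and symmetric: "\<forall>u\<in>S. \<forall>w\<in>S. M u w = M w u"
    and v_compl: "v \<in> orth_compl_on S e m" and v_unit: "inner_on S v v = 1"
    and v_max: "\<And>w. w \<in> orth_compl_on S e m \<Longrightarrow> inner_on S w w = 1 \<Longrightarrow>
                    quad_form S M w \<le> quad_form S M v"
begin

lemma quad_form_le:
  assumes u: "u \<in> orth_compl_on S e m"
  shows "quad_form S M u \<le> quad_form S M v * inner_on S u u"
proof (cases "inner_on S u u = 0")
  case True
  then have "\<And>x. x \<in> S \<Longrightarrow> u x = 0" using eq_zero_of_inner_on_self_eq_zero[OF finite] by blast
  then show ?thesis using True by (simp add: quad_form_expand)
next
  case False
  then have pos: "0 < inner_on S u u" using inner_on_self_nonneg[of S u] by linarith
  define c where "c = 1 / sqrt (inner_on S u u)"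
  have cc: "c\<^sup>2 * inner_on S u u = 1" unfolding c_def using pos by (simp add: power_divide)
  have "c\<^sup>2 * quad_form S M u = quad_form S M (\<lambda>x. c * u x)" by (simp add: quad_form_scale)
  also have "\<dots> \<le> quad_form S M v"
    using cc by (intro v_max orth_compl_on_scale[OF u])
      (simp add: inner_on_scale_left inner_on_scale_right power2_eq_square)
  also have "\<dots> = c\<^sup>2 * (quad_form S M v * inner_on S u u)" using cc by (simp add: mult_ac)
  finally show ?thesis using pos unfolding c_def by simp
qed

lemma inner_on_matvec_eq_zero:
  assumes w: "w \<in> orth_compl_on S e m" "inner_on S w v = 0"
  shows "inner_on S w (matvec S M v) = 0"
proof (rule linear_le_quadratic_imp_zero)
  fix t :: real
  let ?u = "\<lambda>x. v x + t * w x"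
  have "quad_form S M ?u \<le> quad_form S M v * inner_on S ?u ?u"
    by (rule quad_form_le[OF orth_compl_on_add_scale[OF v_compl w(1)]])
  moreover have "inner_on S ?u ?u = 1 + t\<^sup>2 * inner_on S w w"
  proof -
    have "inner_on S v w = 0" using w(2) by (simp add: inner_on_commute)
    then show ?thesis
      using v_unit w(2) by (simp add: inner_on_add_scale_left inner_on_add_scale_right power2_eq_square)
  qed
  ultimately have "quad_form S M v + 2 * t * inner_on S w (matvec S M v) + t\<^sup>2 * quad_form S M w
      \<le> quad_form S M v * (1 + t\<^sup>2 * inner_on S w w)"
    by (simp only: quad_form_add_scale[OF symmetric])
  then show "2 * t * inner_on S w (matvec S M v)
      \<le> t\<^sup>2 * (quad_form S M v * inner_on S w w - quad_form S M w)"
    by (simp add: algebra_simps)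
qed

lemma eigenvector:
  assumes eig: "\<And>i u. i < m \<Longrightarrow> u \<in> S \<Longrightarrow> matvec S M (e i) u = l i * e i u"
  shows "\<forall>u\<in>S. matvec S M v u = quad_form S M v * v u"
proof -
  let ?q = "quad_form S M v"
  define w where "w = (\<lambda>x. if x \<in> S then matvec S M v x - ?q * v x else 0)"
  have inner_w: "inner_on S w g = inner_on S (matvec S M v) g - ?q * inner_on S v g" for g
  proof -
    have "inner_on S w g = inner_on S (\<lambda>x. matvec S M v x - ?q * v x) g"
      unfolding w_def by (rule inner_on_cong) auto
    then show ?thesis by (simp add: inner_on_diff_left inner_on_scale_left)
  qed
  have "inner_on S w (e i) = 0" if i: "i < m" for i
  proof -
    have "inner_on S (matvec S M v) (e i) = inner_on S v (matvec S M (e i))"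
      using inner_on_matvec_symmetric[OF symmetric] by simp
    also have "\<dots> = l i * inner_on S v (e i)"
      using eig[OF i] by (simp add: inner_on_scale_right[symmetric] cong: inner_on_cong)
    finally show ?thesis using v_compl i by (simp add: inner_w orth_compl_on_def)
  qed
  then have w_compl: "w \<in> orth_compl_on S e m" unfolding orth_compl_on_def w_def by simp
  have "inner_on S (matvec S M v) v = ?q" unfolding quad_form_def by (rule inner_on_commute)
  then have w_v: "inner_on S w v = 0" using v_unit by (simp add: inner_w)
  have "inner_on S w w = inner_on S (matvec S M v) w - ?q * inner_on S v w"
    by (rule inner_w)
  also have "\<dots> = inner_on S w (matvec S M v) - ?q * inner_on S w v"
    by (simp only: inner_on_commute[of S "matvec S M v" w] inner_on_commute[of S v w])
  also have "\<dots> = 0" by (simp add: inner_on_matvec_eq_zero[OF w_compl w_v] w_v)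
  finally have "\<And>u. u \<in> S \<Longrightarrow> w u = 0"
    using eq_zero_of_inner_on_self_eq_zero[OF finite] by blast
  then show ?thesis unfolding w_def by simp
qed

end

lemma symmetric_eigenbasis_upto:
  assumes "finite S" "\<forall>u\<in>S. \<forall>v\<in>S. M u v = M v u" "k \<le> card S"
  shows "\<exists>e l. orthonormal_on S e k \<and> (\<forall>i<k. \<forall>v\<in>S. matvec S M (e i) v = l i * e i v)"
  using assms(3)
proof (induction k)
  case 0
  show ?case by (simp add: orthonormal_on_def)
next
  case (Suc k)
  then obtain e l where e: "orthonormal_on S e k"
    and eig: "\<forall>i<k. \<forall>v\<in>S. matvec S M (e i) v = l i * e i v" by auto
  obtain v where v: "v \<in> orth_compl_on S e k" "inner_on S v v = 1"
    and max: "\<And>w. w \<in> orth_compl_on S e k \<Longrightarrow> inner_on S w w = 1 \<Longrightarrow>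
                   quad_form S M w \<le> quad_form S M v"
    using quad_form_attains_max_on_orth_compl[OF assms(1) e, of M] Suc.prems by auto
  interpret quad_form_max S M e k v
    using assms(1,2) v max by unfold_locales auto
  have "orthonormal_on S (e(k := v)) (Suc k)"
    using orthonormal_on_extend[OF e v(2)] v(1) by (simp add: orth_compl_on_def)
  moreover have "\<forall>i<Suc k. \<forall>u\<in>S. matvec S M ((e(k := v)) i) u
      = (l(k := quad_form S M v)) i * (e(k := v)) i u"
    using eigenvector eig by (auto simp: less_Suc_eq)
  ultimately show ?case by blast
qed

lemma symmetric_eigenbasis_exists:
  assumes "finite S" "\<forall>u\<in>S. \<forall>v\<in>S. M u v = M v u"
  obtains e l where "orthonormal_on S e (card S)"
    "\<forall>i<card S. \<forall>v\<in>S. matvec S M (e i) v = l i * e i v"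
  using symmetric_eigenbasis_upto[OF assms order.refl] by blast

section \<open>The heat kernel in an eigenbasis\<close>

lemma matvec_power_eigen_expansion:
  assumes fin: "finite S" and orth: "orthonormal_on S e (card S)"
    and eig: "\<forall>i<card S. \<forall>v\<in>S. matvec S M (e i) v = l i * e i v"
    and v: "v \<in> S"
  shows "((matvec S M) ^^ k) f v = (\<Sum>i<card S. inner_on S f (e i) * l i ^ k * e i v)"
  using v
proof (induction k arbitrary: v)
  case 0
  then show ?case using orthonormal_on_expansion[OF orth fin] by simp
next
  case (Suc k)
  have "((matvec S M) ^^ Suc k) f v = (\<Sum>u\<in>S. M v u * ((matvec S M) ^^ k) f u)"
    using Suc.prems by (simp add: matvec_apply)
  also have "\<dots> = (\<Sum>u\<in>S. M v u * (\<Sum>i<card S. inner_on S f (e i) * l i ^ k * e i u))"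
    using Suc.IH by (intro sum.cong) auto
  also have "\<dots> = (\<Sum>i<card S. inner_on S f (e i) * l i ^ k * (\<Sum>u\<in>S. M v u * e i u))"
    by (simp add: sum_distrib_left sum_distrib_right sum.swap[of _ S] mult_ac)
  also have "\<dots> = (\<Sum>i<card S. inner_on S f (e i) * l i ^ Suc k * e i v)"
    using eig Suc.prems by (intro sum.cong) (auto simp: matvec_apply[symmetric])
  finally show ?case .
qed

lemma heat_apply_eigen_expansion:
  assumes fin: "finite S" and orth: "orthonormal_on S e (card S)"
    and eig: "\<forall>i<card S. \<forall>v\<in>S. matvec S (nlap V E) (e i) v = l i * e i v"
    and v: "v \<in> S"
  shows "heat_apply V E S t f v = (\<Sum>i<card S. inner_on S f (e i) * exp (- t * l i) * e i v)"
proof -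
  have "(- t) ^ k / fact k * ((matvec S (nlap V E)) ^^ k) f v
      = (\<Sum>i<card S. inner_on S f (e i) * e i v * ((- t * l i) ^ k /\<^sub>R fact k))" for k
    unfolding matvec_power_eigen_expansion[OF fin orth eig v] power_mult_distrib
    by (simp add: sum_distrib_left divide_inverse mult_ac)
  moreover have "(\<lambda>k. \<Sum>i<card S. inner_on S f (e i) * e i v * ((- t * l i) ^ k /\<^sub>R fact k))
      sums (\<Sum>i<card S. inner_on S f (e i) * e i v * exp (- t * l i))"
    by (intro sums_sum sums_mult exp_converges)
  ultimately show ?thesis
    unfolding heat_apply_def by (simp add: sums_iff mult_ac)
qed

definition riemann_defect :: "real \<Rightarrow> nat \<Rightarrow> real \<Rightarrow> real" where
  "riemann_defect T N lam = 1 - (\<Sum>j = 1..N. T / real N * lam * exp (- (real j * T / real N) * lam))"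

text \<open>
  The sum is a right Riemann sum with step h = T/N for \<integral>_0^T \<lambda> exp(-t \<lambda>) dt = 1 - exp(-T \<lambda>).
  With q = exp(-h \<lambda>) it is the geometric sum h \<lambda> (q - q^(N+1)) / (1 - q), and
  1 - h \<lambda> \<le> q \<le> 1 / (1 + h \<lambda>) pins the defect between 0 and h \<lambda> + exp(-T \<lambda>).
\<close>

lemma riemann_defect_bounds:
  fixes T lam :: real and N :: nat
  assumes T: "0 < T" and N: "1 \<le> N" and lam: "0 < lam"
  shows "0 \<le> riemann_defect T N lam" and "riemann_defect T N lam \<le> T / real N * lam + exp (- T * lam)"
proof -
  define a where "a = T / real N * lam"
  define q where "q = exp (- a)"
  have a0: "0 < a" unfolding a_def using T N lam by simp
  have q0: "0 < q" and q1: "q < 1" unfolding q_def using a0 by auto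
  have q_pow: "exp (- (real j * T / real N) * lam) = q ^ j" for j :: nat
  proof -
    have "- (real j * T / real N) * lam = real j * (- a)" unfolding a_def by simp
    then show ?thesis unfolding q_def using exp_of_nat_mult[of j "- a"] by simp
  qed
  define P where "P = (\<Sum>j = 1..N. q ^ j)"
  have defect: "riemann_defect T N lam = 1 - a * P"
    unfolding riemann_defect_def P_def q_pow sum_distrib_left a_def by simp
  have geom: "(1 - q) * P = q - q ^ Suc N"
    unfolding P_def using sum_gp_multiplied[OF N, of q] by simp
  have aq: "a * q \<le> 1 - q"
  proof -
    have "(1 + a) * q \<le> exp a * q" using q0 exp_ge_add_one_self[of a] by (intro mult_right_mono) auto
    also have "\<dots> = 1" unfolding q_def by (simp add: exp_minus)
    finally show ?thesis by (simp add: algebra_simps)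
  qed
  have qa: "1 \<le> q + a" unfolding q_def using exp_ge_add_one_self[of "-a"] by simp
  have key: "(1 - q) * (1 - a * P) = (1 - q) - a * q + a * q * q ^ N"
  proof -
    have "(1 - q) * (1 - a * P) = (1 - q) - a * ((1 - q) * P)" by (simp add: algebra_simps)
    also have "\<dots> = (1 - q) - a * (q - q ^ Suc N)" unfolding geom ..
    finally show ?thesis by (simp add: algebra_simps)
  qed
  have "0 \<le> (1 - q) * (1 - a * P)"
    unfolding key using aq a0 q0 by (simp add: add_nonneg_nonneg)
  then show "0 \<le> riemann_defect T N lam"
    unfolding defect using q1 by (simp add: zero_le_mult_iff)
  have "(a * q - (1 - q)) * q ^ N \<le> 0" using aq q0 by (simp add: mult_nonpos_nonneg)
  then have "(1 - q) * (1 - a * P) \<le> (1 - q) * (a + q ^ N)"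
    unfolding key using qa by (simp add: algebra_simps)
  moreover have "q ^ N = exp (- T * lam)" using q_pow[of N] N by simp
  ultimately show "riemann_defect T N lam \<le> T / real N * lam + exp (- T * lam)"
    unfolding defect a_def[symmetric] using q1 by simp
qed

lemma heat_riemann_sum_eigen_expansion:
  fixes T :: real and N :: nat
  assumes fin: "finite S" and sym: "\<forall>u\<in>S. \<forall>v\<in>S. nlap V E u v = nlap V E v u"
    and orth: "orthonormal_on S e (card S)"
    and eig: "\<forall>i<card S. \<forall>v\<in>S. matvec S (nlap V E) (e i) v = l i * e i v"
    and y: "\<And>v. v \<in> S \<Longrightarrow> matvec S (nlap V E) x v = y v"
    and v: "v \<in> S"
  shows "x v - (\<Sum>j = 1..N. heat_apply V E S (real j * T / real N) (\<lambda>u. T / real N * y u) v)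
           = (\<Sum>i<card S. inner_on S x (e i) * riemann_defect T N (l i) * e i v)"
proof -
  define c where "c i = inner_on S x (e i)" for i
  have y_coeff: "inner_on S (\<lambda>u. T / real N * y u) (e i) = T / real N * (l i * c i)"
    if i: "i < card S" for i
  proof -
    have "inner_on S y (e i) = inner_on S (matvec S (nlap V E) x) (e i)"
      using y by (intro inner_on_cong) auto
    also have "\<dots> = inner_on S x (matvec S (nlap V E) (e i))"
      using inner_on_matvec_symmetric[OF sym] by simp
    also have "\<dots> = inner_on S x (\<lambda>v. l i * e i v)"
      using eig i by (intro inner_on_cong) auto
    finally show ?thesis unfolding c_def by (simp only: inner_on_scale_left inner_on_scale_right)
  qed
  have "(\<Sum>j = 1..N. heat_apply V E S (real j * T / real N) (\<lambda>u. T / real N * y u) v)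
      = (\<Sum>j = 1..N. \<Sum>i<card S. T / real N * (l i * c i) * exp (- (real j * T / real N) * l i) * e i v)"
    using heat_apply_eigen_expansion[OF fin orth eig v] y_coeff by (intro sum.cong refl) simp
  also have "\<dots> = (\<Sum>i<card S. c i * e i v *
      (\<Sum>j = 1..N. T / real N * l i * exp (- (real j * T / real N) * l i)))"
    by (subst sum.swap) (simp add: sum_distrib_left mult_ac)
  finally show ?thesis
    unfolding orthonormal_on_expansion[OF orth fin v, of x] c_def[symmetric] riemann_defect_def
    by (simp add: sum_subtractf[symmetric] algebra_simps)
qed

lemma heat_quadrature_error:
  fixes T \<gamma> :: real and N :: nat
  assumes fin: "finite S" and sym: "\<forall>u\<in>S. \<forall>v\<in>S. nlap V E u v = nlap V E v u"
    and orth: "orthonormal_on S e (card S)"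
    and eig: "\<forall>i<card S. \<forall>v\<in>S. matvec S (nlap V E) (e i) v = l i * e i v"
    and T: "0 < T" and N: "1 \<le> N" and step: "T / real N \<le> \<gamma>"
    and l: "\<And>i. i < card S \<Longrightarrow> 0 < l i \<and> exp (- T * l i) \<le> \<gamma>"
    and y: "\<And>v. v \<in> S \<Longrightarrow> matvec S (nlap V E) x v = y v"
  shows "vnorm S (\<lambda>v. x v - (\<Sum>j = 1..N. heat_apply V E S (real j * T / real N) (\<lambda>u. T / real N * y u) v))
           \<le> \<gamma> * (vnorm S y + vnorm S x)"
proof -
  have \<gamma>: "0 \<le> \<gamma>" using step T N by (meson divide_nonneg_nonneg less_imp_le of_nat_0_le_iff order_trans)
  define c where "c i = inner_on S x (e i)" for i
  define \<phi> where "\<phi> i = riemann_defect T N (l i)" for i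
  have \<phi>_bound: "(\<phi> i)\<^sup>2 \<le> (\<gamma> * (1 + l i))\<^sup>2" if i: "i < card S" for i
  proof -
    have "T / real N * l i \<le> \<gamma> * l i" using mult_right_mono[OF step] l[OF i] by simp
    then have "0 \<le> \<phi> i" "\<phi> i \<le> \<gamma> * (1 + l i)"
      using riemann_defect_bounds[OF T N, of "l i"] l[OF i] unfolding \<phi>_def by (simp_all add: algebra_simps)
    then show ?thesis by (auto intro: power_mono)
  qed
  have x_plus_y: "x v + y v = (\<Sum>i<card S. (c i * (1 + l i)) * e i v)" if v: "v \<in> S" for v
  proof -
    have "y v = (\<Sum>i<card S. c i * l i * e i v)"
      using matvec_power_eigen_expansion[OF fin orth eig v, of 1 x] y[OF v] unfolding c_def by simp
    then show ?thesis using orthonormal_on_expansion[OF orth fin v, of x] unfolding c_def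
      by (simp add: sum.distrib[symmetric] algebra_simps)
  qed
  have "vnorm S (\<lambda>v. x v - (\<Sum>j = 1..N. heat_apply V E S (real j * T / real N) (\<lambda>u. T / real N * y u) v))
      = sqrt (\<Sum>i<card S. (c i * \<phi> i)\<^sup>2)"
    using heat_riemann_sum_eigen_expansion[OF fin sym orth eig y]
    by (intro vnorm_orthonormal_expansion[OF orth]) (simp add: c_def \<phi>_def)
  also have "\<dots> \<le> sqrt (\<Sum>i<card S. \<gamma>\<^sup>2 * (c i * (1 + l i))\<^sup>2)"
  proof (intro real_sqrt_le_mono sum_mono)
    fix i assume "i \<in> {..<card S}"
    then have "(c i)\<^sup>2 * (\<phi> i)\<^sup>2 \<le> (c i)\<^sup>2 * (\<gamma> * (1 + l i))\<^sup>2"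
      using \<phi>_bound by (intro mult_left_mono) auto
    then show "(c i * \<phi> i)\<^sup>2 \<le> \<gamma>\<^sup>2 * (c i * (1 + l i))\<^sup>2"
      by (simp add: power_mult_distrib mult_ac)
  qed
  also have "\<dots> = \<gamma> * vnorm S (\<lambda>v. x v + y v)"
    using \<gamma> vnorm_orthonormal_expansion[OF orth x_plus_y]
    by (simp add: sum_distrib_left[symmetric] real_sqrt_mult)
  also have "\<dots> \<le> \<gamma> * (vnorm S y + vnorm S x)"
    using \<gamma> L2_set_triangle_ineq[of x y S] by (intro mult_left_mono) (simp_all add: vnorm_def L2_set_def)
  finally show ?thesis .
qed

section \<open>A Poincar\'e inequality for the Dirichlet Laplacian\<close>

lemma rtrancl_path_square_le:
  fixes g :: "'a \<Rightarrow> real"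
  assumes "rtrancl_path r x xs y"
  shows "(g x)\<^sup>2 \<le> real (length xs + 1) *
           (sum_list (map (\<lambda>(a, c). (g a - g c)\<^sup>2) (zip (x # xs) xs)) + (g y)\<^sup>2)"
  using assms
proof (induction rule: rtrancl_path.induct)
  case (base x)
  then show ?case by simp
next
  case (step x y ys z)
  define n where "n = real (length ys + 1)"
  define R where "R = sum_list (map (\<lambda>(a, c). (g a - g c)\<^sup>2) (zip (y # ys) ys)) + (g z)\<^sup>2"
  define d where "d = g x - g y"
  have n: "1 \<le> n" unfolding n_def by simp
  have IH: "(g y)\<^sup>2 \<le> n * R" using step.IH unfolding n_def R_def .
  \<comment> \<open>Cauchy--Schwarz for the two weights \<open>1\<close> and \<open>n\<close>\<close>
  have "n * (d + g y)\<^sup>2 \<le> n * (n + 1) * d\<^sup>2 + (n + 1) * (g y)\<^sup>2"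
    using zero_le_power2[of "n * d - g y"] by (simp add: power2_eq_square algebra_simps)
  also have "\<dots> \<le> n * (n + 1) * d\<^sup>2 + (n + 1) * (n * R)"
    using IH n by (intro add_left_mono mult_left_mono) auto
  finally have "n * (d + g y)\<^sup>2 \<le> n * ((n + 1) * (d\<^sup>2 + R))" by (simp add: algebra_simps)
  then have "(d + g y)\<^sup>2 \<le> (n + 1) * (d\<^sup>2 + R)" using n by simp
  then show ?case unfolding n_def R_def d_def by (simp add: algebra_simps)
qed

lemma rtrancl_path_steps:
  assumes "rtrancl_path r x xs y"
  shows "\<forall>p\<in>set (zip (x # xs) xs). r (fst p) (snd p)"
  using assms by (induction rule: rtrancl_path.induct) auto

lemma rtrancl_path_set:
  assumes "rtrancl_path r x xs y" "\<And>a c. r a c \<Longrightarrow> c \<in> S"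
  shows "set xs \<subseteq> S"
  using assms by (induction rule: rtrancl_path.induct) auto

lemma distinct_zip_tl_not_reversed:
  assumes "distinct l" "(a, c) \<in> set (zip l (tl l))"
  shows "(c, a) \<notin> set (zip l (tl l))"
proof
  assume "(c, a) \<in> set (zip l (tl l))"
  then obtain j where j: "j < length l - 1" "c = l ! j" "a = l ! Suc j"
    by (auto simp: set_zip nth_tl)
  from assms(2) obtain i where i: "i < length l - 1" "a = l ! i" "c = l ! Suc i"
    by (auto simp: set_zip nth_tl)
  have "i = Suc j" "Suc i = j"
    using i j assms(1) nth_eq_iff_index_eq by (metis Suc_lessD less_diff_conv add.commute plus_1_eq_Suc)+
  then show False by simp
qed

lemma adj_nonneg: "0 \<le> adj E u v"
  unfolding adj_def by simp

lemma adj_commute: "simple_graph V E \<Longrightarrow> adj E u v = adj E v u"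
  unfolding adj_def simple_graph_def by auto

lemma degree_eq_sum_adj:
  assumes "simple_graph V E" "S \<subseteq> V"
  shows "degree V E v = (\<Sum>u\<in>S. adj E v u) + (\<Sum>u\<in>V - S. adj E v u)"
proof -
  have fin: "finite V" using assms(1) unfolding simple_graph_def by simp
  have "degree V E v = (\<Sum>u\<in>V. adj E v u)"
    unfolding degree_def adj_def sum.If_cases[OF fin] by (simp add: Int_def conj_commute)
  also have "\<dots> = (\<Sum>u\<in>V - S. adj E v u) + (\<Sum>u\<in>S. adj E v u)"
    by (rule sum.subset_diff[OF assms(2) fin])
  finally show ?thesis by simp
qed

lemma one_le_card_of_mem: "finite S \<Longrightarrow> w \<in> S \<Longrightarrow> 1 \<le> real (card S)"
  by (metis One_nat_def Suc_leI card_gt_0_iff empty_iff of_nat_1 of_nat_le_iff)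

lemma sum_adj_le_card_minus_one:
  assumes "simple_graph V E" "finite S" "v \<in> S"
  shows "(\<Sum>u\<in>S. adj E v u) \<le> real (card S) - 1"
proof -
  have "adj E v v = 0" using assms(1) unfolding adj_def simple_graph_def by simp
  then have "(\<Sum>u\<in>S. adj E v u) = (\<Sum>u\<in>S - {v}. adj E v u)"
    using sum.remove[OF assms(2,3), of "adj E v"] by simp
  also have "\<dots> \<le> (\<Sum>u\<in>S - {v}. 1)" by (rule sum_mono) (simp add: adj_def)
  moreover have "1 \<le> card S" using assms(2,3) by (metis One_nat_def Suc_leI card_gt_0_iff empty_iff)
  ultimately show ?thesis using assms(2,3) by (simp add: of_nat_diff)
qed

text \<open>A simple path is counted twice in the edge sum, once in each direction.\<close>

lemma simple_path_edge_sum_le: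
  fixes g :: "'a \<Rightarrow> real"
  assumes sg: "simple_graph V E" and fin: "finite S"
    and path: "rtrancl_path (\<lambda>a c. a \<in> S \<and> c \<in> S \<and> E a c) x xs y" and dist: "distinct (x # xs)"
  shows "2 * sum_list (map (\<lambda>(a, c). (g a - g c)\<^sup>2) (zip (x # xs) xs))
           \<le> (\<Sum>v\<in>S. \<Sum>u\<in>S. adj E v u * (g v - g u)\<^sup>2)"
proof -
  define P where "P = set (zip (x # xs) xs)"
  define h where "h p = (g (fst p) - g (snd p))\<^sup>2" for p
  have "sum_list (map (\<lambda>(a, c). (g a - g c)\<^sup>2) (zip (x # xs) xs)) = sum h P"
    using sum_list_distinct_conv_sum_set[OF distinct_zipI1[OF dist], of h]
    unfolding P_def h_def by (simp add: case_prod_beta')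
  moreover have "P \<inter> prod.swap ` P = {}"
    using distinct_zip_tl_not_reversed[OF dist] unfolding P_def by fastforce
  moreover have "sum h (prod.swap ` P) = sum h P"
    by (subst sum.reindex) (auto simp: h_def power2_commute)
  moreover have edges: "P \<union> prod.swap ` P \<subseteq> S \<times> S"
    "\<And>p. p \<in> P \<union> prod.swap ` P \<Longrightarrow> adj E (fst p) (snd p) = 1"
    using rtrancl_path_steps[OF path] sg unfolding P_def adj_def simple_graph_def by auto
  moreover have "(\<Sum>p\<in>P \<union> prod.swap ` P. h p) \<le> (\<Sum>p\<in>S \<times> S. adj E (fst p) (snd p) * h p)"
  proof -
    have "(\<Sum>p\<in>P \<union> prod.swap ` P. h p) = (\<Sum>p\<in>P \<union> prod.swap ` P. adj E (fst p) (snd p) * h p)"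
      using edges(2) by simp
    also have "\<dots> \<le> (\<Sum>p\<in>S \<times> S. adj E (fst p) (snd p) * h p)"
      by (rule sum_mono2) (use fin edges(1) in \<open>auto simp: h_def adj_nonneg\<close>)
    finally show ?thesis .
  qed
  ultimately show ?thesis
    unfolding h_def by (simp add: sum.union_disjoint P_def sum.cartesian_product case_prod_beta)
qed

lemma connected_on_square_le:
  fixes g :: "'a \<Rightarrow> real"
  assumes sg: "simple_graph V E" and fin: "finite S" and conn: "connected_on E S"
    and x: "x \<in> S" and y: "y \<in> S"
  shows "(g x)\<^sup>2 \<le> real (card S) *
           ((\<Sum>v\<in>S. \<Sum>u\<in>S. adj E v u * (g v - g u)\<^sup>2) / 2 + (g y)\<^sup>2)"
proof -
  define r where "r a c \<longleftrightarrow> a \<in> S \<and> c \<in> S \<and> E a c" for a c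
  let ?path_sum = "\<lambda>xs. sum_list (map (\<lambda>(a, c). (g a - g c)\<^sup>2) (zip (x # xs) xs))"
  have "(x, y) \<in> {(a, c). a \<in> S \<and> c \<in> S \<and> E a c}\<^sup>*"
    using conn x y unfolding connected_on_def by blast
  then have "r\<^sup>*\<^sup>* x y" unfolding r_def rtranclp_rtrancl_eq by simp
  then obtain xs0 where "rtrancl_path r x xs0 y" using rtranclp_eq_rtrancl_path by metis
  then obtain xs where r_path: "rtrancl_path r x xs y" and dist: "distinct (x # xs)"
    using rtrancl_path_distinct by metis
  from r_path have path: "rtrancl_path (\<lambda>a c. a \<in> S \<and> c \<in> S \<and> E a c) x xs y"
    unfolding r_def[abs_def] .
  have "set (x # xs) \<subseteq> S" using rtrancl_path_set[OF path, of S] x by auto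
  then have "length (x # xs) \<le> card S"
    using distinct_card[OF dist] card_mono[OF fin] by metis
  then have len: "real (length xs + 1) \<le> real (card S)" by simp
  have "(g x)\<^sup>2 \<le> real (length xs + 1) * (?path_sum xs + (g y)\<^sup>2)"
    by (rule rtrancl_path_square_le[OF path])
  also have "\<dots> \<le> real (card S) * (?path_sum xs + (g y)\<^sup>2)"
    using len by (rule mult_right_mono) (intro add_nonneg_nonneg sum_list_nonneg; auto)
  also have "\<dots> \<le> real (card S) * ((\<Sum>v\<in>S. \<Sum>u\<in>S. adj E v u * (g v - g u)\<^sup>2) / 2 + (g y)\<^sup>2)"
    using simple_path_edge_sum_le[OF sg fin path dist, of g] by (intro mult_left_mono) auto
  finally show ?thesis .
qed

lemma dirichlet_form_split:
  fixes g :: "'a \<Rightarrow> real"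
  assumes sg: "simple_graph V E" and SV: "S \<subseteq> V"
  shows "(\<Sum>v\<in>S. degree V E v * (g v)\<^sup>2) - (\<Sum>v\<in>S. \<Sum>u\<in>S. adj E v u * g v * g u)
         = (\<Sum>v\<in>S. \<Sum>u\<in>S. adj E v u * (g v - g u)\<^sup>2) / 2
           + (\<Sum>v\<in>S. (\<Sum>u\<in>V - S. adj E v u) * (g v)\<^sup>2)"
proof -
  have inner: "(\<Sum>v\<in>S. \<Sum>u\<in>S. adj E v u * (g u)\<^sup>2) = (\<Sum>v\<in>S. \<Sum>u\<in>S. adj E v u * (g v)\<^sup>2)"
    by (subst sum.swap) (simp add: adj_commute[OF sg])
  have "(\<Sum>v\<in>S. \<Sum>u\<in>S. adj E v u * (g v - g u)\<^sup>2)
      = (\<Sum>v\<in>S. \<Sum>u\<in>S. adj E v u * (g v)\<^sup>2) + (\<Sum>v\<in>S. \<Sum>u\<in>S. adj E v u * (g u)\<^sup>2)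
        - 2 * (\<Sum>v\<in>S. \<Sum>u\<in>S. adj E v u * g v * g u)"
    by (simp add: power2_diff algebra_simps sum.distrib sum_subtractf sum_distrib_left)
  moreover have "(\<Sum>v\<in>S. degree V E v * (g v)\<^sup>2)
      = (\<Sum>v\<in>S. \<Sum>u\<in>S. adj E v u * (g v)\<^sup>2) + (\<Sum>v\<in>S. (\<Sum>u\<in>V - S. adj E v u) * (g v)\<^sup>2)"
    unfolding degree_eq_sum_adj[OF sg SV] by (simp add: distrib_right sum.distrib sum_distrib_right)
  ultimately show ?thesis using inner by simp
qed

lemma sum_interior_degree_square_le:
  fixes g :: "'a \<Rightarrow> real"
  assumes sg: "simple_graph V E" and fin: "finite S" and bound: "\<And>v. v \<in> S \<Longrightarrow> (g v)\<^sup>2 \<le> M"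
  shows "(\<Sum>v\<in>S. (\<Sum>u\<in>S. adj E v u) * (g v)\<^sup>2) \<le> real (card S) * (real (card S) - 1) * M"
proof -
  have "(\<Sum>v\<in>S. (\<Sum>u\<in>S. adj E v u) * (g v)\<^sup>2) \<le> (\<Sum>v\<in>S. (real (card S) - 1) * M)"
  proof (rule sum_mono)
    fix v assume v: "v \<in> S"
    have "0 \<le> (\<Sum>u\<in>S. adj E v u)" by (intro sum_nonneg adj_nonneg)
    then show "(\<Sum>u\<in>S. adj E v u) * (g v)\<^sup>2 \<le> (real (card S) - 1) * M"
      using sum_adj_le_card_minus_one[OF sg fin v] bound[OF v] by (intro mult_mono) auto
  qed
  then show ?thesis by simp
qed

lemma boundary_vertex_square_le:
  fixes g :: "'a \<Rightarrow> real"
  assumes finV: "finite V" and SV: "S \<subseteq> V" and w: "w \<in> S" and boundary: "u0 \<in> V - S" "E w u0"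
  shows "(g w)\<^sup>2 \<le> (\<Sum>v\<in>S. (\<Sum>u\<in>V - S. adj E v u) * (g v)\<^sup>2)"
proof -
  have "1 \<le> (\<Sum>u\<in>V - S. adj E w u)"
    using member_le_sum[of u0 "V - S" "adj E w"] finV boundary by (simp add: adj_nonneg adj_def)
  then have "(g w)\<^sup>2 \<le> (\<Sum>u\<in>V - S. adj E w u) * (g w)\<^sup>2"
    using mult_right_mono[of 1 _ "(g w)\<^sup>2"] by simp
  also have "\<dots> \<le> (\<Sum>v\<in>S. (\<Sum>u\<in>V - S. adj E v u) * (g v)\<^sup>2)"
    using finite_subset[OF SV finV] w
    by (intro member_le_sum) (auto intro!: mult_nonneg_nonneg sum_nonneg adj_nonneg)
  finally show ?thesis .
qed

lemma degree_weighted_poincare: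
  fixes g :: "'a \<Rightarrow> real"
  assumes sg: "simple_graph V E" and SV: "S \<subseteq> V" and conn: "connected_on E S"
    and w: "w \<in> S" and boundary: "u0 \<in> V - S" "E w u0"
  shows "(\<Sum>v\<in>S. degree V E v * (g v)\<^sup>2)
     \<le> real (card S) ^ 3 * ((\<Sum>v\<in>S. degree V E v * (g v)\<^sup>2) - (\<Sum>v\<in>S. \<Sum>u\<in>S. adj E v u * g v * g u))"
proof -
  have finV: "finite V" using sg unfolding simple_graph_def by simp
  have fin: "finite S" using finite_subset[OF SV finV] .
  define s where "s = real (card S)"
  have s: "1 \<le> s" unfolding s_def using one_le_card_of_mem[OF fin w] .
  define J where "J = (\<Sum>v\<in>S. \<Sum>u\<in>S. adj E v u * (g v - g u)\<^sup>2)"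
  define X where "X = (\<Sum>v\<in>S. (\<Sum>u\<in>V - S. adj E v u) * (g v)\<^sup>2)"
  have J: "0 \<le> J" unfolding J_def by (intro sum_nonneg mult_nonneg_nonneg adj_nonneg) auto
  have X: "(g w)\<^sup>2 \<le> X" unfolding X_def by (rule boundary_vertex_square_le[of V S w u0 E, OF finV SV w boundary])
  obtain m where m: "m \<in> S" "Max ((\<lambda>v. (g v)\<^sup>2) ` S) = (g m)\<^sup>2"
    using obtains_MAX[OF fin] w by blast
  have "(g m)\<^sup>2 \<le> s * (J / 2 + (g w)\<^sup>2)"
    using connected_on_square_le[OF sg fin conn m(1) w] unfolding s_def J_def .
  also have "\<dots> \<le> s * (J / 2 + X)" using X s by simp
  finally have max: "(g m)\<^sup>2 \<le> s * (J / 2 + X)" .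
  have "(\<Sum>v\<in>S. degree V E v * (g v)\<^sup>2) = (\<Sum>v\<in>S. (\<Sum>u\<in>S. adj E v u) * (g v)\<^sup>2) + X"
    unfolding X_def degree_eq_sum_adj[OF sg SV] by (simp add: distrib_right sum.distrib)
  also have "\<dots> \<le> s * (s - 1) * (g m)\<^sup>2 + X"
    using sum_interior_degree_square_le[OF sg fin, of g "(g m)\<^sup>2"] fin m(2)[symmetric]
    unfolding s_def by simp
  also have "\<dots> \<le> s * (s - 1) * (s * (J / 2 + X)) + X"
    using max s by (simp add: mult_left_mono)
  also have "\<dots> \<le> s ^ 3 * (J / 2 + X)"
  proof -
    have "0 \<le> X" using X by (meson order_trans zero_le_power2)
    then have "X \<le> s\<^sup>2 * (J / 2 + X)"
      using J s mult_right_mono[of 1 "s\<^sup>2" "J / 2 + X"] by (simp add: one_le_power)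
    moreover have "s * (s - 1) * (s * Q) = s ^ 3 * Q - s\<^sup>2 * Q" for Q
      by (simp add: power2_eq_square power3_eq_cube algebra_simps)
    ultimately show ?thesis by (metis add.commute diff_add_cancel add_le_cancel_left)
  qed
  finally show ?thesis
    unfolding dirichlet_form_split[OF sg SV] s_def J_def X_def .
qed

lemma nlap_commute: "simple_graph V E \<Longrightarrow> nlap V E u v = nlap V E v u"
  unfolding nlap_def using adj_commute[of V E u v] by (auto simp: mult.commute)

lemma quad_form_nlap:
  fixes f :: "'a \<Rightarrow> real"
  assumes fin: "finite S" and deg: "\<And>v. v \<in> S \<Longrightarrow> 0 < degree V E v"
  defines "g \<equiv> \<lambda>v. f v / sqrt (degree V E v)"
  shows "quad_form S (nlap V E) f
           = (\<Sum>v\<in>S. degree V E v * (g v)\<^sup>2) - (\<Sum>v\<in>S. \<Sum>u\<in>S. adj E v u * g v * g u)"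
proof -
  have "quad_form S (nlap V E) f = (\<Sum>v\<in>S. \<Sum>u\<in>S.
      (if v = u then degree V E v else 0) * g v * g u - adj E v u * g v * g u)"
    unfolding quad_form_expand
  proof (intro sum.cong refl)
    fix v u assume "v \<in> S" "u \<in> S"
    then have "0 < degree V E v" "0 < degree V E u" using deg by auto
    then show "f v * nlap V E v u * f u
        = (if v = u then degree V E v else 0) * g v * g u - adj E v u * g v * g u"
      unfolding nlap_def g_def by (simp add: real_sqrt_mult field_simps)
  qed
  also have "\<dots> = (\<Sum>v\<in>S. \<Sum>u\<in>S. if v = u then degree V E v * g v * g u else 0)
      - (\<Sum>v\<in>S. \<Sum>u\<in>S. adj E v u * g v * g u)"
    by (simp add: sum_subtractf if_distrib[of "\<lambda>x. x * _"] cong: if_cong)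
  also have "(\<Sum>v\<in>S. \<Sum>u\<in>S. if v = u then degree V E v * g v * g u else 0)
      = (\<Sum>v\<in>S. degree V E v * (g v)\<^sup>2)"
    using fin by (simp add: power2_eq_square mult.assoc)
  finally show ?thesis .
qed

lemma nlap_poincare:
  assumes sg: "simple_graph V E" and SV: "S \<subseteq> V" and conn: "connected_on E S"
    and w: "w \<in> S" and boundary: "u0 \<in> V - S" "E w u0"
    and deg: "\<And>v. v \<in> S \<Longrightarrow> 0 < degree V E v"
  shows "inner_on S f f \<le> real (card S) ^ 3 * quad_form S (nlap V E) f"
proof -
  have fin: "finite S" using sg SV finite_subset unfolding simple_graph_def by blast
  define g where "g v = f v / sqrt (degree V E v)" for v
  have "inner_on S f f = (\<Sum>v\<in>S. degree V E v * (g v)\<^sup>2)"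
    unfolding inner_on_self_eq_sum_squares g_def
  proof (intro sum.cong refl)
    fix v assume "v \<in> S"
    with deg have "0 < degree V E v" .
    then show "(f v)\<^sup>2 = degree V E v * (f v / sqrt (degree V E v))\<^sup>2" by (simp add: power_divide)
  qed
  then show ?thesis
    using degree_weighted_poincare[OF sg SV conn w boundary, of g] quad_form_nlap[OF fin deg, of f]
    unfolding g_def by simp
qed

lemma nlap_eigenvalue_ge:
  assumes sg: "simple_graph V E" and SV: "S \<subseteq> V" and conn: "connected_on E S"
    and w: "w \<in> S" and boundary: "u0 \<in> V - S" "E w u0"
    and deg: "\<And>v. v \<in> S \<Longrightarrow> 0 < degree V E v"
    and orth: "orthonormal_on S e (card S)"
    and eig: "\<forall>i<card S. \<forall>v\<in>S. matvec S (nlap V E) (e i) v = l i * e i v"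
    and i: "i < card S"
  shows "1 \<le> real (card S) ^ 3 * l i"
proof -
  have unit: "inner_on S (e i) (e i) = 1" using orth i by (simp add: orthonormal_on_def)
  have "quad_form S (nlap V E) (e i) = inner_on S (e i) (\<lambda>v. l i * e i v)"
    unfolding quad_form_def using eig i by (intro inner_on_cong) auto
  also have "\<dots> = l i" using unit by (simp add: inner_on_scale_right)
  finally show ?thesis
    using nlap_poincare[OF sg SV conn w boundary deg, of "e i"] unit by simp
qed

section \<open>Local solutions on a boundable set\<close>

lemma boundable_boundary_edge:
  assumes "simple_graph V E" "boundable V E b S"
  obtains w u0 where "w \<in> S" "u0 \<in> V - S" "E w u0"
  using assms unfolding boundable_def vboundary_def simple_graph_def by blast

lemma degree_pos_of_connected_on:
  assumes sg: "simple_graph V E" and SV: "S \<subseteq> V" and conn: "connected_on E S"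
    and w: "w \<in> S" "u0 \<in> V" "E w u0" and v: "v \<in> S"
  shows "0 < degree V E v"
proof -
  have finV: "finite V" using sg unfolding simple_graph_def by simp
  have "(v, w) \<in> {(a, c). a \<in> S \<and> c \<in> S \<and> E a c}\<^sup>*"
    using conn v w(1) unfolding connected_on_def by blast
  then have "\<exists>y\<in>V. E v y"
    by (cases rule: converse_rtranclE) (use w SV in auto)
  then have "{u \<in> V. E v u} \<noteq> {}" by blast
  then show ?thesis unfolding degree_def using finV by (simp add: card_gt_0_iff)
qed

lemma matvec_nlap_apply:
  assumes fin: "finite S" and v: "v \<in> S" and deg: "0 < degree V E v"
  shows "matvec S (nlap V E) x v
           = x v - (\<Sum>u\<in>S. adj E v u / sqrt (degree V E v * degree V E u) * x u)"
proof -
  define d where "d = degree V E"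
  have "matvec S (nlap V E) x v = (\<Sum>u\<in>S. (if v = u then d v else 0) * x u / sqrt (d v * d u))
      - (\<Sum>u\<in>S. adj E v u / sqrt (d v * d u) * x u)"
    unfolding matvec_apply[OF v] nlap_def d_def[symmetric]
    by (simp add: sum_subtractf[symmetric] diff_divide_distrib left_diff_distrib)
  also have "(\<Sum>u\<in>S. (if v = u then d v else 0) * x u / sqrt (d v * d u))
      = (\<Sum>u\<in>S. if v = u then d v * x u / sqrt (d v * d u) else 0)"
    by (intro sum.cong) auto
  also have "\<dots> = x v"
    using fin v deg unfolding d_def by simp
  finally show ?thesis unfolding d_def .
qed

lemma sum_outside_eq_sum_vboundary:
  assumes sg: "simple_graph V E" and v: "v \<in> S"
  shows "(\<Sum>u\<in>V - S. adj E v u * f u) = (\<Sum>u\<in>vboundary V E S. adj E v u * f u)"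
proof (rule sum.mono_neutral_right)
  show "\<forall>u\<in>V - S - vboundary V E S. adj E v u * f u = 0"
  proof
    fix u assume u: "u \<in> V - S - vboundary V E S"
    have "\<not> E v u"
    proof
      assume "E v u"
      then have "E u v" using sg unfolding simple_graph_def by blast
      then show False using u v unfolding vboundary_def by blast
    qed
    then show "adj E v u * f u = 0" unfolding adj_def by simp
  qed
qed (use sg in \<open>auto simp: vboundary_def simple_graph_def\<close>)

text \<open>The neighbours of a vertex of S lie in S or in \<delta>(S); hence \<L>_S x_S = b_1.\<close>

lemma matvec_nlap_local_solution:
  assumes sg: "simple_graph V E" and SV: "S \<subseteq> V" and x: "is_local_solution V E S b x"
    and v: "v \<in> S" and deg: "0 < degree V E v"
  shows "matvec S (nlap V E) x v = bvec1 V E S b v"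
proof -
  have finV: "finite V" using sg unfolding simple_graph_def by simp
  define t where "t u = adj E v u / sqrt (degree V E v * degree V E u)" for u
  have "x v = (\<Sum>u\<in>{u \<in> V. E v u}. x u / sqrt (degree V E v * degree V E u))"
    using x v unfolding is_local_solution_def by blast
  also have "\<dots> = (\<Sum>u\<in>V. t u * x u)"
    unfolding t_def adj_def sum.inter_filter[OF finV] by (intro sum.cong) auto
  also have "\<dots> = (\<Sum>u\<in>V - S. t u * b u) + (\<Sum>u\<in>S. t u * x u)"
    using sum.subset_diff[OF SV finV, of "\<lambda>u. t u * x u"] x
    unfolding is_local_solution_def by simp
  also have "(\<Sum>u\<in>V - S. t u * b u) = bvec1 V E S b v"
    using sum_outside_eq_sum_vboundary[OF sg v, of "\<lambda>u. b u / sqrt (degree V E v * degree V E u)"] v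
    unfolding t_def bvec1_def by simp
  finally show ?thesis
    using matvec_nlap_apply[OF finite_subset[OF SV finV] v deg, of x] unfolding t_def by simp
qed

lemma nat_ceiling_divide_step:
  fixes T \<gamma> :: real
  assumes "0 < T" "0 < \<gamma>"
  shows "1 \<le> nat \<lceil>T / \<gamma>\<rceil>" and "T / real (nat \<lceil>T / \<gamma>\<rceil>) \<le> \<gamma>"
proof -
  have pos: "0 < T / \<gamma>" using assms by simp
  then show "1 \<le> nat \<lceil>T / \<gamma>\<rceil>" by (simp add: le_nat_iff)
  have N: "T / \<gamma> \<le> real (nat \<lceil>T / \<gamma>\<rceil>)"
    using pos le_of_int_ceiling[of "T / \<gamma>"] by linarith
  have "0 < real (nat \<lceil>T / \<gamma>\<rceil>)" using N pos by linarith
  then have "T / real (nat \<lceil>T / \<gamma>\<rceil>) \<le> T / (T / \<gamma>)"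
    by (rule divide_left_mono[OF N less_imp_le[OF assms(1)] mult_pos_pos[OF _ pos]])
  also have "\<dots> = \<gamma>" using assms by simp
  finally show "T / real (nat \<lceil>T / \<gamma>\<rceil>) \<le> \<gamma>" .
qed

lemma horizon_pos:
  fixes s \<gamma> :: real
  assumes s: "1 \<le> s" and \<gamma>: "0 < \<gamma>" "\<gamma> < 1"
  shows "0 < s ^ 3 * ln (s ^ 3 / \<gamma>)"
proof -
  have "\<gamma> < s ^ 3" using s \<gamma> one_le_power[OF s, of 3] by linarith
  then show ?thesis using s \<gamma> by (intro mult_pos_pos ln_gt_zero) (simp_all add: less_divide_eq)
qed

lemma exp_neg_horizon_le:
  fixes s \<gamma> lam :: real
  assumes s: "1 \<le> s" and \<gamma>: "0 < \<gamma>" "\<gamma> < 1" and lam: "1 \<le> s ^ 3 * lam"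
  shows "exp (- (s ^ 3 * ln (s ^ 3 / \<gamma>)) * lam) \<le> \<gamma>"
proof -
  have s3: "1 \<le> s ^ 3" using s by (simp add: one_le_power)
  have "ln (1 / \<gamma>) \<le> ln (s ^ 3 / \<gamma>)"
    using s s3 \<gamma> by (subst ln_le_cancel_iff) (auto simp: divide_right_mono)
  also have "\<dots> \<le> ln (s ^ 3 / \<gamma>) * (s ^ 3 * lam)"
    using mult_left_mono[OF lam, of "ln (s ^ 3 / \<gamma>)"] s3 \<gamma> by simp
  finally have "- ln \<gamma> \<le> s ^ 3 * ln (s ^ 3 / \<gamma>) * lam"
    using \<gamma> by (simp add: ln_div mult_ac)
  then have "exp (- (s ^ 3 * ln (s ^ 3 / \<gamma>)) * lam) \<le> exp (ln \<gamma>)" by simp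
  then show ?thesis using \<gamma> by simp
qed

theorem lemma2:
  fixes V :: "'a set" and E :: "'a \<Rightarrow> 'a \<Rightarrow> bool"
    and b x :: "'a \<Rightarrow> real" and S :: "'a set" and \<gamma> :: real
  assumes "simple_graph V E" and "connected_on E V"
    and "supp V b \<noteq> {}"
    and "boundable V E b S"
    and "is_local_solution V E S b x"
    and "0 < \<gamma>" and "\<gamma> < 1"
  shows "let s = real (card S);
             T = s ^ 3 * ln (s ^ 3 / \<gamma>);
             N = nat \<lceil>T / \<gamma>\<rceil>;
             b1 = bvec1 V E S b
         in vnorm S (\<lambda>v. x v - (\<Sum>j = 1..N. heat_apply V E S (real j * T / real N) (\<lambda>u. T / real N * b1 u) v))
            \<le> \<gamma> * (vnorm S b1 + vnorm S x)"
proof -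
  note sg = assms(1) and \<gamma> = assms(6,7)
  have SV: "S \<subseteq> V" and conn: "connected_on E S" using assms(4) unfolding boundable_def by auto
  obtain w u0 where w: "w \<in> S" and boundary: "u0 \<in> V - S" "E w u0"
    using boundable_boundary_edge[OF sg assms(4)] .
  have fin: "finite S" using sg SV finite_subset unfolding simple_graph_def by blast
  have deg: "\<And>v. v \<in> S \<Longrightarrow> 0 < degree V E v"
    using degree_pos_of_connected_on[OF sg SV conn w] boundary by blast
  have sym: "\<forall>u\<in>S. \<forall>v\<in>S. nlap V E u v = nlap V E v u" using nlap_commute[OF sg] by blast
  obtain e l where orth: "orthonormal_on S e (card S)"
    and eig: "\<forall>i<card S. \<forall>v\<in>S. matvec S (nlap V E) (e i) v = l i * e i v"
    using symmetric_eigenbasis_exists[OF fin sym] by blast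
  define s where "s = real (card S)"
  define T where "T = s ^ 3 * ln (s ^ 3 / \<gamma>)"
  have s: "1 \<le> s" unfolding s_def using one_le_card_of_mem[OF fin w] .
  have T: "0 < T" unfolding T_def using horizon_pos[OF s \<gamma>] .
  have l: "0 < l i \<and> exp (- T * l i) \<le> \<gamma>" if "i < card S" for i
  proof -
    have "1 \<le> s ^ 3 * l i"
      unfolding s_def by (rule nlap_eigenvalue_ge[OF sg SV conn w boundary deg orth eig that])
    moreover from this have "0 < l i"
      using s by (smt (verit) mult_nonneg_nonpos zero_le_power)
    ultimately show ?thesis using exp_neg_horizon_le[OF s \<gamma>] unfolding T_def by simp
  qed
  show ?thesis
    unfolding Let_def s_def[symmetric] T_def[symmetric]
    using heat_quadrature_error[OF fin sym orth eig T nat_ceiling_divide_step[OF T \<gamma>(1)] l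
        matvec_nlap_local_solution[OF sg SV assms(5) _ deg]] .
qed

end
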